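(* Assume $k_{+\infty}=k_{-\infty}=:k_\infty$. For every twice continuously differentiable $J:\mathbb{R}\to(0,\infty)$ with $J(x)\to1$ as $x\to\pm\infty$, $$T\ \ge\ \mathrm{sech}^2\left\{\frac12\int_{-\infty}^{\infty}\left|\frac{J^2}{k_\infty}\left\{k^2+\frac{J''}{J}\right\}-\frac{k_\infty}{J^2}\right|\mathrm{d}x\right\}.$$
   Context: Standing setup: $k^2:\mathbb{R}\to\mathbb{R}$ is a piecewise continuous function (it may be negative somewhere) with $k^2(x)\to k_{\pm\infty}^2$ as $x\to\pm\infty$, where $k_{\pm\infty}>0$ and $k^2-k_{\pm\infty}^2$ is integrable near $\pm\infty$. For the equation $u''+k^2(x)u=0$ there is a solution with $u(x)=e^{ik_{-\infty}x}+r\,e^{-ik_{-\infty}x}+o(1)$ as $x\to-\infty$ and $u(x)=\tau\,e^{ik_{+\infty}x}+o(1)$ as $x\to+\infty$; the transmission probability is $T=(k_{+\infty}/k_{-\infty})|\tau|^2$. Here $\mathrm{sech}=1/\cosh$, and if the integral equals $+\infty$ the bound is read as the trivial statement $T\ge 0$. *)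

theory Defs
  imports "HOL-Analysis.Analysis"
begin

definition sech :: "real \<Rightarrow> real" where
  "sech x = 1 / cosh x"

definition piecewise_continuous :: "(real \<Rightarrow> real) \<Rightarrow> bool" where
  "piecewise_continuous f \<longleftrightarrow>
     (\<exists>S. (\<forall>a b. finite (S \<inter> {a..b})) \<and>
          (\<forall>x. x \<notin> S \<longrightarrow> isCont f x) \<and>
          (\<forall>x\<in>S. (\<exists>l. (f \<longlongrightarrow> l) (at_left x)) \<and> (\<exists>l. (f \<longlongrightarrow> l) (at_right x))))"

text \<open>u is a (Caratheodory) solution of u'' + q u = 0: u is C^1 with derivative du,
  and du is the indefinite integral of -q u.\<close>
definition schrod_solution :: "(real \<Rightarrow> real) \<Rightarrow> (real \<Rightarrow> complex) \<Rightarrow> (real \<Rightarrow> complex) \<Rightarrow> bool" where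
  "schrod_solution q u du \<longleftrightarrow>
     (\<forall>x. (u has_vector_derivative du x) (at x)) \<and> continuous_on UNIV du \<and>
     (\<forall>a b. a \<le> b \<longrightarrow>
        ((\<lambda>t. - (complex_of_real (q t) * u t)) has_integral (du b - du a)) {a..b})"

end

theory Submission
  imports Defs
begin

(* Put  P = u/J  and  R = -(i/k)(J u' - J' u).  Away from the discontinuities of q
   one has  P' = i kappa R  and  R' = i Lambda P  with  kappa = k/J^2  and
   Lambda = J^2/k (q + J''/J), so the integrand of the theorem is |kappa - Lambda|.

   (1) The Wronskian Im(conj u u') is constant; comparing its values at +inf and -inf gives
       |tau|^2 + |r|^2 = 1 and |P+R|^2 - |P-R|^2 = 4|tau|^2 everywhere.
   (2) For N = |P-R|^2 the function  ln(sqrt(N+e) + sqrt(N+4|tau|^2+2e))  has derivative bounded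
       by |kappa - Lambda|/2, so it decreases by at most half the integral on any interval.
   (3) Along sequences where J' -> 0, N -> 0 at +inf and N -> 4|r|^2 at -inf.  Letting e -> 0
       gives 1 + |r| <= exp(I/2) |tau|, which together with |tau|^2 + |r|^2 = 1 yields
       |tau|^2 >= sech^2(I/2). *)

lemma first_order_remainder_bound:
  fixes E E' :: "real \<Rightarrow> complex"
  assumes dE: "\<And>x. (E has_vector_derivative E' x) (at x)"
    and h: "0 < h"
    and lip: "\<forall>s\<in>{t..t+h}. norm (E' s - E' t) \<le> L * (s - t)"
    and L: "0 \<le> L"
  shows "norm (E (t+h) - E t - h *\<^sub>R E' t) \<le> L * h * h"
proof -
  have i1: "(E' has_integral (E (t+h) - E t)) {t..t+h}"
    by (rule fundamental_theorem_of_calculus) (use h in \<open>auto intro: has_vector_derivative_at_within dE\<close>)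
  have i2: "((\<lambda>s. E' t) has_integral (h *\<^sub>R E' t)) {t..t+h}"
    using has_integral_const_real[of "E' t" t "t+h"] h by (simp add: content_real)
  have i3: "((\<lambda>s. E' s - E' t) has_integral (E (t+h) - E t - h *\<^sub>R E' t)) (cbox t (t+h))"
    using has_integral_diff[OF i1 i2] by simp
  have "norm (E (t+h) - E t - h *\<^sub>R E' t) \<le> (L*h) * measure lborel (cbox t (t+h))"
  proof (rule has_integral_bound[OF _ i3])
    show "0 \<le> L * h" using L h by simp
    fix s assume "s \<in> cbox t (t+h)"
    then have "s \<in> {t..t+h}" by simp
    then have "norm (E' s - E' t) \<le> L * (s - t)" using lip by blast
    also have "\<dots> \<le> L * h" using \<open>s \<in> {t..t+h}\<close> L by (intro mult_left_mono) auto
    finally show "norm (E' s - E' t) \<le> L * h" .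
  qed
  then show ?thesis using h by (simp add: content_real)
qed

text \<open>If all translates of \<open>E\<close> tend to zero along \<open>F\<close> and \<open>E'\<close> is eventually Lipschitz on
  unit windows, then \<open>E'\<close> tends to zero as well (a Landau--Kolmogorov type argument).\<close>
lemma lipschitz_derivative_tendsto_zero:
  fixes E E' :: "real \<Rightarrow> complex" and F :: "real filter"
  assumes dE: "\<And>x. (E has_vector_derivative E' x) (at x)"
    and lim: "\<And>h. ((\<lambda>t. E (t+h)) \<longlongrightarrow> 0) F"
    and L: "L > 0"
    and lip: "eventually (\<lambda>t. \<forall>s\<in>{t..t+1}. norm (E' s - E' t) \<le> L * (s - t)) F"
  shows "(E' \<longlongrightarrow> 0) F"
proof (rule tendstoI)
  fix e :: real assume e: "e > 0"
  define h where "h = min 1 (e / (4*L))"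
  have h0: "h > 0" and h1: "h \<le> 1" and hL: "L * h \<le> e/4"
    using e L by (auto simp: h_def min_def field_simps)
  define d where "d = e * h / 4"
  have d0: "d > 0" using e h0 by (simp add: d_def)
  have ev1: "eventually (\<lambda>t. dist (E (t+h)) 0 < d) F" using lim[of h] d0 by (rule tendstoD)
  have ev2: "eventually (\<lambda>t. dist (E (t+0)) 0 < d) F" using lim[of 0] d0 by (rule tendstoD)
  show "eventually (\<lambda>t. dist (E' t) 0 < e) F"
    using ev1 ev2 lip
  proof eventually_elim
    case (elim t)
    have lip': "\<forall>s\<in>{t..t+h}. norm (E' s - E' t) \<le> L * (s - t)" using elim(3) h1 by auto
    have est: "norm (E (t+h) - E t - h *\<^sub>R E' t) \<le> L * h * h"
      by (rule first_order_remainder_bound[OF dE h0 lip']) (use L in simp)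
    have "h *\<^sub>R E' t = (E (t+h) - E t) - (E (t+h) - E t - h *\<^sub>R E' t)" by simp
    then have "norm (h *\<^sub>R E' t) \<le> norm (E (t+h) - E t) + norm (E (t+h) - E t - h *\<^sub>R E' t)"
      by (metis norm_triangle_ineq4)
    moreover have "norm (E (t+h) - E t) \<le> norm (E (t+h)) + norm (E t)" by (rule norm_triangle_ineq4)
    ultimately have "norm (h *\<^sub>R E' t) \<le> norm (E (t+h)) + norm (E t) + norm (E (t+h) - E t - h *\<^sub>R E' t)"
      by linarith
    also have "\<dots> < d + d + L*h*h" using elim est by simp
    finally have "h * norm (E' t) < 2*d + L*h*h" using h0 by simp
    also have "\<dots> \<le> h * (3*e/4)" using hL h0 by (simp add: d_def field_simps)
    finally have "norm (E' t) < 3*e/4" using h0 by simp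
    then show ?case using e by simp
  qed
qed

lemma has_integral_norm_le_length:
  fixes g f :: "real \<Rightarrow> complex"
  assumes "(g has_integral (f s - f t)) {t..s}" "t \<le> s"
    and "\<And>x. x \<in> {t..s} \<Longrightarrow> norm (g x) \<le> B" "0 \<le> B"
  shows "norm (f s - f t) \<le> B * (s - t)"
proof -
  have "norm (f s - f t) \<le> B * measure lborel (cbox t s)"
    by (rule has_integral_bound[OF assms(4)]) (use assms(1,3) in auto)
  then show ?thesis using assms(2) by simp
qed

lemma filterlim_shift_at_top: "filterlim (\<lambda>t. t + h) at_top (at_top :: real filter)"
  using filterlim_tendsto_add_at_top[OF tendsto_const filterlim_ident, of h] by (simp add: add.commute)

lemma filterlim_shift_at_bot: "filterlim (\<lambda>t. t + h) at_bot (at_bot :: real filter)"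
proof -
  have "filterlim (\<lambda>t. - t + - h) at_top (at_bot :: real filter)"
    using filterlim_tendsto_add_at_top[OF tendsto_const filterlim_uminus_at_top_at_bot, of "-h"]
    by (simp add: add.commute)
  from iffD1[OF filterlim_uminus_at_top this] show ?thesis by (simp add: add.commute)
qed

lemma eventually_unit_window_at_top:
  "eventually P (at_top :: real filter) \<Longrightarrow> eventually (\<lambda>t. \<forall>s\<in>{t..t+1}. P s) at_top"
  unfolding eventually_at_top_linorder by (metis atLeastAtMost_iff order_trans)

lemma eventually_unit_window_at_bot:
  "eventually P (at_bot :: real filter) \<Longrightarrow> eventually (\<lambda>t. \<forall>s\<in>{t..t+1}. P s) at_bot"
proof -
  assume "eventually P at_bot"
  then obtain N where N: "\<forall>n\<le>N. P n" unfolding eventually_at_bot_linorder by blast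
  show ?thesis unfolding eventually_at_bot_linorder
    by (rule exI[of _ "N - 1"]) (use N in auto)
qed

lemma decrease_le_integral:
  fixes f f' w :: "real \<Rightarrow> real"
  assumes S: "finite S" and ab: "a \<le> b"
    and d: "\<And>x. x \<in> {a<..<b} - S \<Longrightarrow> (f has_real_derivative f' x) (at x)"
    and c: "continuous_on {a..b} f"
    and le: "\<And>x. x \<in> {a..b} - S \<Longrightarrow> \<bar>f' x\<bar> \<le> w x"
    and w0: "\<And>x. 0 \<le> w x"
    and wi: "w integrable_on {a..b}"
  shows "f a - f b \<le> integral {a..b} w"
proof -
  define f2 where "f2 x = (if x \<in> S then 0 else f' x)" for x
  have "(f2 has_integral (f b - f a)) {a..b}"
  proof (rule fundamental_theorem_of_calculus_interior_strong[OF S ab _ c])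
    fix x assume "x \<in> {a<..<b} - S"
    then show "(f has_vector_derivative f2 x) (at x)"
      using d[of x] by (simp add: f2_def has_real_derivative_iff_has_vector_derivative)
  qed
  from has_integral_neg[OF this]
  have i1: "((\<lambda>x. - f2 x) has_integral (f a - f b)) {a..b}" by simp
  have i2: "(w has_integral integral {a..b} w) {a..b}" using wi by (rule integrable_integral)
  show ?thesis
  proof (rule has_integral_le[OF i1 i2])
    fix x assume "x \<in> {a..b}"
    then show "- f2 x \<le> w x"
      using le[of x] w0[of x] by (cases "x \<in> S") (auto simp: f2_def)
  qed
qed

lemma constant_if_deriv_zero_off_locally_finite:
  fixes f :: "real \<Rightarrow> real"
  assumes c: "continuous_on UNIV f" and S: "\<And>a b. finite (S \<inter> {a..b})"
    and d: "\<And>x. x \<notin> S \<Longrightarrow> (f has_real_derivative 0) (at x)"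
  shows "f a = f b"
proof -
  have le: "g x - g y \<le> 0"
    if "x \<le> y" "continuous_on UNIV g" "\<And>x. x \<notin> S \<Longrightarrow> (g has_real_derivative 0) (at x)"
    for g :: "real \<Rightarrow> real" and x y
  proof -
    have "g x - g y \<le> integral {x..y} (\<lambda>_. 0::real)"
      by (rule decrease_le_integral[of "S \<inter> {x..y}" x y g "\<lambda>_. 0"])
         (use S that in \<open>auto intro: continuous_on_subset\<close>)
    then show ?thesis by simp
  qed
  have dm: "((\<lambda>x. - f x) has_real_derivative 0) (at x)" if "x \<notin> S" for x
    using DERIV_minus[OF d[OF that]] by simp
  have cm: "continuous_on UNIV (\<lambda>x. - f x)" using c by (intro continuous_intros)
  show ?thesis
    using le[of a b, OF _ c d] le[of a b, OF _ cm dm] le[of b a, OF _ c d] le[of b a, OF _ cm dm]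
    by (cases "a \<le> b") auto
qed

lemma tendsto_zero_mult_bounded:
  fixes f g :: "'a \<Rightarrow> complex"
  assumes "(f \<longlongrightarrow> 0) F" "\<And>x. norm (g x) \<le> B"
  shows "((\<lambda>x. f x * g x) \<longlongrightarrow> 0) F"
proof (rule Lim_null_comparison)
  show "eventually (\<lambda>x. norm (f x * g x) \<le> norm (f x) * B) F"
    by (intro always_eventually allI) (simp add: norm_mult mult_left_mono assms(2))
  show "((\<lambda>x. norm (f x) * B) \<longlongrightarrow> 0) F"
    using tendsto_norm[OF assms(1)] by (intro tendsto_mult_left_zero) simp
qed

lemma exp_linear_has_vector_derivative:
  "((\<lambda>t. exp (c * complex_of_real (k * t))) has_vector_derivative
     (c * complex_of_real k * exp (c * complex_of_real (k * t)))) (at t)"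
proof -
  have "((\<lambda>z. exp (c * complex_of_real k * z)) has_field_derivative
          (c * complex_of_real k * exp (c * complex_of_real k * complex_of_real t))) (at (complex_of_real t))"
    by (auto intro!: derivative_eq_intros)
  from has_vector_derivative_real_field[OF this]
  show ?thesis by (simp add: mult.assoc)
qed

lemma normsq_has_real_derivative:
  fixes f :: "real \<Rightarrow> complex"
  assumes "(f has_vector_derivative f') (at t)"
  shows "((\<lambda>x. (cmod (f x))\<^sup>2) has_real_derivative 2 * Re (cnj (f t) * f')) (at t)"
proof -
  have "((\<lambda>x. (Re (f x))\<^sup>2 + (Im (f x))\<^sup>2) has_real_derivative
          (2 * Re (f t) * Re f' + 2 * Im (f t) * Im f')) (at t)"
    using assms by (auto intro!: derivative_eq_intros)
  then show ?thesis by (simp add: cmod_power2 algebra_simps)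
qed

section \<open>Solutions of \<open>u'' + q u = 0\<close>\<close>

lemma schrod_second_derivative:
  assumes sol: "schrod_solution q u du" and cq: "isCont q t"
  shows "(du has_vector_derivative (-(complex_of_real (q t) * u t))) (at t)"
proof -
  define g where "g s = -(complex_of_real (q s) * u s)" for s
  define a where "a = t - 1"
  define b where "b = t + 1"
  have du_d: "\<And>x. (u has_vector_derivative du x) (at x)"
    and int: "\<And>a b. a \<le> b \<Longrightarrow> (g has_integral (du b - du a)) {a..b}"
    using sol unfolding schrod_solution_def g_def by simp_all
  have ab: "a \<le> b" by (simp add: a_def b_def)
  have gi: "g integrable_on {a..b}" using int[OF ab] by blast
  have du_eq: "du s = du a + integral {a..s} g" if "s \<in> {a..b}" for s
    using integral_unique[OF int[of a s]] that by simp
  have cu: "isCont u t" using du_d[of t] by (rule has_vector_derivative_continuous)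
  have cg: "isCont g t" unfolding g_def by (intro continuous_minus continuous_mult continuous_of_real cq cu)
  have tab: "t \<in> {a..b} - {}" by (simp add: a_def b_def)
  have cgw: "continuous (at t within ({a..b} - {})) g"
    using cg by (rule continuous_at_imp_continuous_at_within)
  have tin: "t \<in> interior {a..b}" by (simp add: a_def b_def)
  have "((\<lambda>x. integral {a..x} g) has_vector_derivative g t) (at t within ({a..b} - {}))"
    by (rule integral_has_vector_derivative_continuous_at[OF gi tab finite.emptyI cgw])
  then have "((\<lambda>x. integral {a..x} g) has_vector_derivative g t) (at t)"
    unfolding Diff_empty at_within_interior[OF tin] .
  then have "((\<lambda>x. du a + integral {a..x} g) has_vector_derivative g t) (at t)"
    using has_vector_derivative_add[OF has_vector_derivative_const] by simp
  then have "(du has_vector_derivative g t) (at t)"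
  proof (rule has_vector_derivative_transform_within_open)
    show "open {a<..<b}" "t \<in> {a<..<b}" by (auto simp: a_def b_def)
    show "du a + integral {a..y} g = du y" if "y \<in> {a<..<b}" for y
      using du_eq[of y] that by simp
  qed
  then show ?thesis by (simp add: g_def)
qed

text \<open>If \<open>u\<close> is asymptotic to a smooth bounded profile \<open>f0\<close> and \<open>q\<close> has a finite limit, then
  \<open>u'\<close> is asymptotic to \<open>f0'\<close>: the error \<open>u - f0\<close> has an eventually Lipschitz derivative.\<close>
lemma schrod_derivative_asymptotics:
  fixes F :: "real filter" and f0 f1 f2 :: "real \<Rightarrow> complex"
  assumes sol: "schrod_solution q u du"
   and shift: "\<And>h. filterlim (\<lambda>t. t + h) F F"
   and window: "\<And>P. eventually P F \<Longrightarrow> eventually (\<lambda>t. \<forall>s\<in>{t..t+1}. P s) F"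
   and qlim: "(q \<longlongrightarrow> c) F"
   and ulim: "((\<lambda>x. u x - f0 x) \<longlongrightarrow> 0) F"
   and d0: "\<And>x. (f0 has_vector_derivative f1 x) (at x)"
   and d1: "\<And>x. (f1 has_vector_derivative f2 x) (at x)"
   and B0: "\<And>x. norm (f0 x) \<le> B0" and B2: "\<And>x. norm (f2 x) \<le> B2"
  shows "((\<lambda>x. du x - f1 x) \<longlongrightarrow> 0) F"
proof -
  define E where "E x = u x - f0 x" for x
  define E' where "E' x = du x - f1 x" for x
  have du_d: "\<And>x. (u has_vector_derivative du x) (at x)"
    and int: "\<And>a b. a \<le> b \<Longrightarrow> ((\<lambda>t. - (complex_of_real (q t) * u t)) has_integral (du b - du a)) {a..b}"
    using sol unfolding schrod_solution_def by simp_all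
  have dE: "\<And>x. (E has_vector_derivative E' x) (at x)"
    unfolding E_def E'_def by (intro has_vector_derivative_diff du_d d0)
  have lim: "((\<lambda>t. E (t+h)) \<longlongrightarrow> 0) F" for h
    using filterlim_compose[OF ulim shift[of h]] by (simp add: E_def)
  have B00: "0 \<le> B0" using B0[of 0] norm_ge_zero order_trans by blast
  have B20: "0 \<le> B2" using B2[of 0] norm_ge_zero order_trans by blast
  define Mq where "Mq = (\<bar>c\<bar> + 1) * (1 + B0)"
  have Mq0: "0 \<le> Mq" using B00 by (simp add: Mq_def)
  have ev1: "eventually (\<lambda>x. dist (q x) c < 1) F" using qlim by (rule tendstoD) simp
  have ev2: "eventually (\<lambda>x. dist (E x) 0 < 1) F" using ulim unfolding E_def by (rule tendstoD) simp
  have rhs_bound: "eventually (\<lambda>x. norm (- (complex_of_real (q x) * u x)) \<le> Mq) F"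
    using ev1 ev2
  proof eventually_elim
    case (elim x)
    have q1: "\<bar>q x\<bar> \<le> \<bar>c\<bar> + 1" using elim(1) by (simp add: dist_real_def)
    have "norm (u x) \<le> norm (E x) + norm (f0 x)" unfolding E_def
      by (metis diff_add_cancel norm_triangle_ineq)
    also have "\<dots> \<le> 1 + B0" using elim(2) B0[of x] by simp
    finally have u1: "norm (u x) \<le> 1 + B0" .
    have "norm (- (complex_of_real (q x) * u x)) = \<bar>q x\<bar> * norm (u x)" by (simp add: norm_mult)
    also have "\<dots> \<le> (\<bar>c\<bar> + 1) * (1 + B0)" by (intro mult_mono q1 u1) auto
    finally show ?case by (simp add: Mq_def)
  qed
  have lip: "eventually (\<lambda>t. \<forall>s\<in>{t..t+1}. norm (E' s - E' t) \<le> (Mq + B2 + 1) * (s - t)) F"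
    using window[OF rhs_bound]
  proof eventually_elim
    case (elim t)
    show ?case
    proof
      fix s assume s: "s \<in> {t..t+1}"
      have ts: "t \<le> s" using s by simp
      have n1: "norm (du s - du t) \<le> Mq * (s - t)"
        by (rule has_integral_norm_le_length[OF int[OF ts] ts _ Mq0]) (use elim s in auto)
      have f1i: "(f2 has_integral (f1 s - f1 t)) {t..s}"
        by (rule fundamental_theorem_of_calculus[OF ts]) (auto intro: has_vector_derivative_at_within d1)
      have n2: "norm (f1 s - f1 t) \<le> B2 * (s - t)"
        by (rule has_integral_norm_le_length[OF f1i ts _ B20]) (use B2 in auto)
      have "norm (E' s - E' t) = norm ((du s - du t) - (f1 s - f1 t))" by (simp add: E'_def algebra_simps)
      also have "\<dots> \<le> norm (du s - du t) + norm (f1 s - f1 t)" by (rule norm_triangle_ineq4)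
      also have "\<dots> \<le> (Mq + B2 + 1) * (s - t)" using n1 n2 ts by (simp add: algebra_simps)
      finally show "norm (E' s - E' t) \<le> (Mq + B2 + 1) * (s - t)" .
    qed
  qed
  have "(E' \<longlongrightarrow> 0) F"
    by (rule lipschitz_derivative_tendsto_zero[OF dE lim _ lip]) (use Mq0 B20 in simp)
  then show ?thesis by (simp add: E'_def[abs_def])
qed

lemma wronskian_constant:
  assumes pc: "piecewise_continuous q" and sol: "schrod_solution q u du"
  shows "Im (cnj (u x) * du x) = Im (cnj (u y) * du y)"
proof -
  obtain S where Sfin: "\<And>a b. finite (S \<inter> {a..b})" and Scont: "\<And>x. x \<notin> S \<Longrightarrow> isCont q x"
    using pc unfolding piecewise_continuous_def by blast
  have du_d: "\<And>x. (u has_vector_derivative du x) (at x)" and cdu: "continuous_on UNIV du"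
    using sol unfolding schrod_solution_def by simp_all
  have cu: "continuous_on UNIV u"
    by (rule continuous_on_vector_derivative) (use du_d has_vector_derivative_at_within in blast)
  show ?thesis
  proof (rule constant_if_deriv_zero_off_locally_finite[where f="\<lambda>x. Im (cnj (u x) * du x)", OF _ Sfin])
    show "continuous_on UNIV (\<lambda>x. Im (cnj (u x) * du x))" by (intro continuous_intros cu cdu)
    fix t assume "t \<notin> S"
    have "((\<lambda>x. Im (cnj (u x) * du x)) has_real_derivative
            Im (cnj (u t) * (-(complex_of_real (q t) * u t)) + cnj (du t) * du t)) (at t)"
      by (intro has_field_derivative_Im has_vector_derivative_mult has_vector_derivative_cnj
          du_d[of t] schrod_second_derivative[OF sol Scont[OF \<open>t \<notin> S\<close>]])
    moreover have "Im (cnj (u t) * (-(complex_of_real (q t) * u t)) + cnj (du t) * du t) = 0"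
      by (simp add: algebra_simps)
    ultimately show "((\<lambda>x. Im (cnj (u x) * du x)) has_real_derivative 0) (at t)" by simp
  qed
qed

lemma wronskian_tendsto:
  fixes u du f0 f1 :: "real \<Rightarrow> complex"
  assumes "((\<lambda>x. u x - f0 x) \<longlongrightarrow> 0) F" "((\<lambda>x. du x - f1 x) \<longlongrightarrow> 0) F"
    and "\<And>x. norm (f0 x) \<le> B0" "\<And>x. norm (f1 x) \<le> B1"
  shows "((\<lambda>x. Im (cnj (u x) * du x) - Im (cnj (f0 x) * f1 x)) \<longlongrightarrow> 0) F"
proof -
  have c1: "((\<lambda>x. cnj (u x - f0 x)) \<longlongrightarrow> 0) F" using tendsto_cnj[OF assms(1)] by simp
  have t1: "((\<lambda>x. cnj (u x - f0 x) * (du x - f1 x)) \<longlongrightarrow> 0) F"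
    using tendsto_mult[OF c1 assms(2)] by simp
  have t2: "((\<lambda>x. cnj (u x - f0 x) * f1 x) \<longlongrightarrow> 0) F" by (rule tendsto_zero_mult_bounded[OF c1 assms(4)])
  have t3: "((\<lambda>x. (du x - f1 x) * cnj (f0 x)) \<longlongrightarrow> 0) F"
    by (rule tendsto_zero_mult_bounded[OF assms(2)]) (use assms(3) in simp)
  have "((\<lambda>x. Im (cnj (u x - f0 x) * (du x - f1 x) + cnj (u x - f0 x) * f1 x + (du x - f1 x) * cnj (f0 x))) \<longlongrightarrow> 0) F"
    using tendsto_Im[OF tendsto_add[OF tendsto_add[OF t1 t2] t3]] by simp
  moreover have "Im (cnj (u x - f0 x) * (du x - f1 x) + cnj (u x - f0 x) * f1 x + (du x - f1 x) * cnj (f0 x))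
      = Im (cnj (u x) * du x) - Im (cnj (f0 x) * f1 x)" for x
    by (simp add: algebra_simps)
  ultimately show ?thesis by simp
qed

section \<open>Scattering solutions\<close>

lemma norm_exp_i_real: "cmod (exp (\<i> * complex_of_real t)) = 1"
  and norm_exp_minus_i_real: "cmod (exp (- \<i> * complex_of_real t)) = 1"
  using norm_exp_i_times[of t] norm_exp_i_times[of "-t"] by simp_all

lemma scattering_derivative_asymptotics:
  assumes sol: "schrod_solution q u du" and k: "k > 0"
    and lim_top: "(q \<longlongrightarrow> k\<^sup>2) at_top" and lim_bot: "(q \<longlongrightarrow> k\<^sup>2) at_bot"
    and asym_bot: "((\<lambda>x. u x - (exp (\<i> * complex_of_real (k * x))
                        + r * exp (- \<i> * complex_of_real (k * x)))) \<longlongrightarrow> 0) at_bot"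
    and asym_top: "((\<lambda>x. u x - \<tau> * exp (\<i> * complex_of_real (k * x))) \<longlongrightarrow> 0) at_top"
  shows "((\<lambda>x. du x - \<i> * complex_of_real k * \<tau> * exp (\<i> * complex_of_real (k * x))) \<longlongrightarrow> 0) at_top"
    and "((\<lambda>x. du x - \<i> * complex_of_real k * (exp (\<i> * complex_of_real (k * x))
                        - r * exp (- \<i> * complex_of_real (k * x)))) \<longlongrightarrow> 0) at_bot"
proof -
  define ep where "ep x = exp (\<i> * complex_of_real (k * x))" for x
  define em where "em x = exp (- \<i> * complex_of_real (k * x))" for x
  have dep: "(ep has_vector_derivative (\<i> * complex_of_real k * ep x)) (at x)" for x
    unfolding ep_def[abs_def] by (rule exp_linear_has_vector_derivative)
  have dem: "(em has_vector_derivative (- \<i> * complex_of_real k * em x)) (at x)" for x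
    unfolding em_def[abs_def] by (rule exp_linear_has_vector_derivative)
  have nep: "cmod (ep x) = 1" and nem: "cmod (em x) = 1" for x
    by (simp_all add: ep_def em_def norm_exp_i_real norm_exp_minus_i_real del: of_real_mult)
  show "((\<lambda>x. du x - \<i> * complex_of_real k * \<tau> * exp (\<i> * complex_of_real (k * x))) \<longlongrightarrow> 0) at_top"
  proof -
    have lim: "((\<lambda>x. du x - \<tau> * (\<i> * complex_of_real k * ep x)) \<longlongrightarrow> 0) at_top"
    proof (rule schrod_derivative_asymptotics[OF sol filterlim_shift_at_top
          eventually_unit_window_at_top lim_top])
      show "((\<lambda>x. u x - \<tau> * ep x) \<longlongrightarrow> 0) at_top" using asym_top by (simp add: ep_def)
      show "((\<lambda>x. \<tau> * ep x) has_vector_derivative \<tau> * (\<i> * complex_of_real k * ep x)) (at x)"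
        "((\<lambda>x. \<tau> * (\<i> * complex_of_real k * ep x)) has_vector_derivative
            \<tau> * (\<i> * complex_of_real k * (\<i> * complex_of_real k * ep x))) (at x)" for x
        by (intro has_vector_derivative_mult_right dep)+
      show "cmod (\<tau> * ep x) \<le> cmod \<tau>"
        "cmod (\<tau> * (\<i> * complex_of_real k * (\<i> * complex_of_real k * ep x))) \<le> cmod \<tau> * k * k" for x
        using k by (simp_all add: norm_mult nep)
    qed
    have "\<tau> * (\<i> * complex_of_real k * ep x) = \<i> * complex_of_real k * \<tau> * ep x" for x
      by (simp only: ac_simps)
    from lim[unfolded this] show ?thesis unfolding ep_def .
  qed
  show "((\<lambda>x. du x - \<i> * complex_of_real k * (exp (\<i> * complex_of_real (k * x))
                        - r * exp (- \<i> * complex_of_real (k * x)))) \<longlongrightarrow> 0) at_bot"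
  proof -
    have lim: "((\<lambda>x. du x - (\<i> * complex_of_real k * ep x + r * (- \<i> * complex_of_real k * em x))) \<longlongrightarrow> 0) at_bot"
    proof (rule schrod_derivative_asymptotics[OF sol filterlim_shift_at_bot
          eventually_unit_window_at_bot lim_bot])
      show "((\<lambda>x. u x - (ep x + r * em x)) \<longlongrightarrow> 0) at_bot" using asym_bot by (simp add: ep_def em_def)
      show "((\<lambda>x. ep x + r * em x) has_vector_derivative
              \<i> * complex_of_real k * ep x + r * (- \<i> * complex_of_real k * em x)) (at x)"
        "((\<lambda>x. \<i> * complex_of_real k * ep x + r * (- \<i> * complex_of_real k * em x)) has_vector_derivative
            \<i> * complex_of_real k * (\<i> * complex_of_real k * ep x)
             + r * (- \<i> * complex_of_real k * (- \<i> * complex_of_real k * em x))) (at x)" for x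
        by (intro has_vector_derivative_add has_vector_derivative_mult_right dep dem)+
      show "cmod (ep x + r * em x) \<le> 1 + cmod r" for x
        using norm_triangle_ineq[of "ep x" "r * em x"] by (simp add: norm_mult nep nem)
      show "cmod (\<i> * complex_of_real k * (\<i> * complex_of_real k * ep x)
             + r * (- \<i> * complex_of_real k * (- \<i> * complex_of_real k * em x))) \<le> k * k + cmod r * (k * k)" for x
        using norm_triangle_ineq[of "\<i> * complex_of_real k * (\<i> * complex_of_real k * ep x)"
            "r * (- \<i> * complex_of_real k * (- \<i> * complex_of_real k * em x))"] k
        by (simp add: norm_mult nep nem)
    qed
    have "\<i> * complex_of_real k * ep x + r * (- \<i> * complex_of_real k * em x)
        = \<i> * complex_of_real k * (ep x - r * em x)" for x
      by (simp add: algebra_simps)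
    from lim[unfolded this] show ?thesis unfolding ep_def em_def .
  qed
qed

lemma scattering_flux:
  assumes pc: "piecewise_continuous q" and sol: "schrod_solution q u du" and k: "k > 0"
    and asym_bot: "((\<lambda>x. u x - (exp (\<i> * complex_of_real (k * x))
                        + r * exp (- \<i> * complex_of_real (k * x)))) \<longlongrightarrow> 0) at_bot"
    and asym_top: "((\<lambda>x. u x - \<tau> * exp (\<i> * complex_of_real (k * x))) \<longlongrightarrow> 0) at_top"
    and dasym_top: "((\<lambda>x. du x - \<i> * complex_of_real k * \<tau> * exp (\<i> * complex_of_real (k * x))) \<longlongrightarrow> 0) at_top"
    and dasym_bot: "((\<lambda>x. du x - \<i> * complex_of_real k * (exp (\<i> * complex_of_real (k * x))
                        - r * exp (- \<i> * complex_of_real (k * x)))) \<longlongrightarrow> 0) at_bot"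
  shows "Im (cnj (u x) * du x) = k * (cmod \<tau>)\<^sup>2" and "(cmod \<tau>)\<^sup>2 + (cmod r)\<^sup>2 = 1"
proof -
  define W where "W = Im (cnj (u 0) * du 0)"
  have W: "Im (cnj (u x) * du x) = W" for x unfolding W_def by (rule wronskian_constant[OF pc sol])
  have const_lim: "W = c" if "((\<lambda>x. W - c) \<longlongrightarrow> 0) F" "F \<noteq> bot" for c and F :: "real filter"
    using tendsto_const_iff that by (metis eq_iff_diff_eq_0)
  define ep where "ep x = exp (\<i> * complex_of_real (k * x))" for x
  have nep: "cmod (ep x) = 1" for x
    unfolding ep_def by (rule norm_exp_i_real)
  have em: "exp (- \<i> * complex_of_real (k * x)) = cnj (ep x)" for x
    by (simp add: ep_def exp_cnj)
  have lim_top: "((\<lambda>x. Im (cnj (u x) * du x) - Im (cnj (\<tau> * ep x) * (\<i> * complex_of_real k * \<tau> * ep x)))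
          \<longlongrightarrow> 0) at_top"
  proof (rule wronskian_tendsto)
    show "((\<lambda>x. u x - \<tau> * ep x) \<longlongrightarrow> 0) at_top"
      "((\<lambda>x. du x - \<i> * complex_of_real k * \<tau> * ep x) \<longlongrightarrow> 0) at_top"
      using asym_top dasym_top unfolding ep_def .
    show "cmod (\<tau> * ep x) \<le> cmod \<tau>" "cmod (\<i> * complex_of_real k * \<tau> * ep x) \<le> k * cmod \<tau>" for x
      using k by (simp_all add: norm_mult nep)
  qed
  have val_top: "Im (cnj (\<tau> * ep x) * (\<i> * complex_of_real k * \<tau> * ep x)) = k * (cmod \<tau>)\<^sup>2" for x
  proof -
    have "Im (cnj (\<tau> * ep x) * (\<i> * complex_of_real k * \<tau> * ep x)) = k * (cmod \<tau>)\<^sup>2 * (cmod (ep x))\<^sup>2"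
      unfolding cmod_power2 by (simp add: algebra_simps power2_eq_square)
    then show ?thesis by (simp add: nep)
  qed
  have Wtop: "W = k * (cmod \<tau>)\<^sup>2"
    by (rule const_lim[OF lim_top[unfolded W val_top]]) simp
  have lim_bot: "((\<lambda>x. Im (cnj (u x) * du x)
           - Im (cnj (ep x + r * cnj (ep x)) * (\<i> * complex_of_real k * (ep x - r * cnj (ep x)))))
          \<longlongrightarrow> 0) at_bot"
  proof (rule wronskian_tendsto)
    show "((\<lambda>x. u x - (ep x + r * cnj (ep x))) \<longlongrightarrow> 0) at_bot"
      "((\<lambda>x. du x - \<i> * complex_of_real k * (ep x - r * cnj (ep x))) \<longlongrightarrow> 0) at_bot"
      using asym_bot dasym_bot unfolding em ep_def[symmetric] .
    show "cmod (ep x + r * cnj (ep x)) \<le> 1 + cmod r" for x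
      using norm_triangle_ineq[of "ep x" "r * cnj (ep x)"] by (simp add: norm_mult nep)
    show "cmod (\<i> * complex_of_real k * (ep x - r * cnj (ep x))) \<le> k * (1 + cmod r)" for x
      using norm_triangle_ineq4[of "ep x" "r * cnj (ep x)"] k by (simp add: norm_mult nep)
  qed
  have val_bot: "Im (cnj (ep x + r * cnj (ep x)) * (\<i> * complex_of_real k * (ep x - r * cnj (ep x))))
      = k * (1 - (cmod r)\<^sup>2)" for x
  proof -
    have "Im (cnj (ep x + r * cnj (ep x)) * (\<i> * complex_of_real k * (ep x - r * cnj (ep x))))
        = k * (cmod (ep x))\<^sup>2 * (1 - (cmod r)\<^sup>2)"
      unfolding cmod_power2 by (simp add: algebra_simps power2_eq_square)
    then show ?thesis by (simp add: nep)
  qed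
  have Wbot: "W = k * (1 - (cmod r)\<^sup>2)"
    by (rule const_lim[OF lim_bot[unfolded W val_bot]]) simp
  show "Im (cnj (u x) * du x) = k * (cmod \<tau>)\<^sup>2" using W Wtop by simp
  have "k * ((cmod \<tau>)\<^sup>2 + (cmod r)\<^sup>2) = k * 1" using Wtop Wbot by (simp add: algebra_simps)
  then show "(cmod \<tau>)\<^sup>2 + (cmod r)\<^sup>2 = 1" using k by simp
qed

section \<open>The Liouville pair\<close>

text \<open>For a solution \<open>u\<close> and a positive weight \<open>J\<close>, the pair \<open>P = u/J\<close>,
  \<open>R = -(i/k)(J u' - J' u)\<close> satisfies the first-order system \<open>P' = i\<kappa>R\<close>, \<open>R' = i\<Lambda>P\<close>
  with \<open>\<kappa> = k/J\<^sup>2\<close> and \<open>\<Lambda> = J\<^sup>2/k (q + J''/J)\<close>.\<close>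
definition liouville_P :: "(real \<Rightarrow> complex) \<Rightarrow> (real \<Rightarrow> real) \<Rightarrow> real \<Rightarrow> complex" where
  "liouville_P u J t = u t * complex_of_real (1 / J t)"

definition liouville_R ::
    "real \<Rightarrow> (real \<Rightarrow> complex) \<Rightarrow> (real \<Rightarrow> complex) \<Rightarrow> (real \<Rightarrow> real) \<Rightarrow> (real \<Rightarrow> real) \<Rightarrow> real \<Rightarrow> complex" where
  "liouville_R k u du J J' t =
     (complex_of_real (J t) * du t - complex_of_real (J' t) * u t) * (- \<i> / complex_of_real k)"

definition liouville_gap ::
    "real \<Rightarrow> (real \<Rightarrow> complex) \<Rightarrow> (real \<Rightarrow> complex) \<Rightarrow> (real \<Rightarrow> real) \<Rightarrow> (real \<Rightarrow> real) \<Rightarrow> real \<Rightarrow> real" where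
  "liouville_gap k u du J J' t = (cmod (liouville_P u J t - liouville_R k u du J J' t))\<^sup>2"

lemma liouville_P_has_vector_derivative:
  assumes du: "(u has_vector_derivative du t) (at t)"
    and dJ: "(J has_real_derivative J' t) (at t)" and J0: "J t \<noteq> 0" and k0: "k \<noteq> 0"
  shows "(liouville_P u J has_vector_derivative
           (\<i> * complex_of_real (k / (J t)\<^sup>2) * liouville_R k u du J J' t)) (at t)"
proof -
  have d1: "((\<lambda>x. 1 / J x) has_real_derivative (- J' t / (J t)\<^sup>2)) (at t)"
    using DERIV_inverse_fun[OF dJ J0] by (simp add: divide_inverse power2_eq_square)
  have "((\<lambda>x. u x * complex_of_real (1 / J x)) has_vector_derivative
          (u t * complex_of_real (- J' t / (J t)\<^sup>2) + du t * complex_of_real (1 / J t))) (at t)"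
    by (rule has_vector_derivative_mult[OF du has_vector_derivative_of_real[OF d1]])
  moreover have "u t * complex_of_real (- J' t / (J t)\<^sup>2) + du t * complex_of_real (1 / J t)
      = \<i> * complex_of_real (k / (J t)\<^sup>2) * liouville_R k u du J J' t"
    using J0 k0 by (simp add: liouville_R_def field_simps power2_eq_square)
  ultimately show ?thesis by (simp add: liouville_P_def[abs_def])
qed

lemma liouville_R_has_vector_derivative:
  assumes u: "(u has_vector_derivative du t) (at t)"
    and du: "(du has_vector_derivative (-(complex_of_real (q t) * u t))) (at t)"
    and dJ: "(J has_real_derivative J' t) (at t)"
    and dJ': "(J' has_real_derivative J'' t) (at t)"
    and J0: "J t \<noteq> 0" and k0: "k \<noteq> 0"
  shows "(liouville_R k u du J J' has_vector_derivative
           (\<i> * complex_of_real ((J t)\<^sup>2 / k * (q t + J'' t / J t)) * liouville_P u J t)) (at t)"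
proof -
  have "((\<lambda>x. (complex_of_real (J x) * du x - complex_of_real (J' x) * u x) * (- \<i> / complex_of_real k))
      has_vector_derivative
      ((complex_of_real (J t) * (-(complex_of_real (q t) * u t)) + complex_of_real (J' t) * du t
       - (complex_of_real (J' t) * du t + complex_of_real (J'' t) * u t)) * (- \<i> / complex_of_real k))) (at t)"
    by (intro has_vector_derivative_mult_left has_vector_derivative_diff
          has_vector_derivative_mult has_vector_derivative_of_real u du dJ dJ')
  moreover have "(complex_of_real (J t) * (-(complex_of_real (q t) * u t)) + complex_of_real (J' t) * du t
       - (complex_of_real (J' t) * du t + complex_of_real (J'' t) * u t)) * (- \<i> / complex_of_real k)
     = \<i> * complex_of_real ((J t)\<^sup>2 / k * (q t + J'' t / J t)) * liouville_P u J t"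
    using J0 k0 by (simp add: liouville_P_def field_simps power2_eq_square)
  ultimately show ?thesis by (simp add: liouville_R_def[abs_def])
qed

lemma liouville_pair_wronskian:
  assumes J0: "J t \<noteq> 0" and k0: "k \<noteq> 0"
  shows "(cmod (liouville_P u J t + liouville_R k u du J J' t))\<^sup>2
       - (cmod (liouville_P u J t - liouville_R k u du J J' t))\<^sup>2 = 4 * Im (cnj (u t) * du t) / k"
proof -
  have polar: "(cmod (P + R))\<^sup>2 - (cmod (P - R))\<^sup>2 = 4 * Re (P * cnj R)" for P R :: complex
    unfolding cmod_power2 by (simp add: algebra_simps power2_eq_square)
  have c1: "cnj (- \<i> / complex_of_real k) = \<i> * complex_of_real (1/k)"
    by (simp add: complex_eq_iff)
  have e: "liouville_P u J t * cnj (liouville_R k u du J J' t) = complex_of_real (1/(J t * k)) * \<i> *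
       (complex_of_real (J t) * (u t * cnj (du t)) - complex_of_real (J' t) * (u t * cnj (u t)))"
    unfolding liouville_P_def liouville_R_def complex_cnj_mult c1 complex_cnj_diff complex_cnj_complex_of_real
    by (simp add: algebra_simps)
  have "Re (liouville_P u J t * cnj (liouville_R k u du J J' t)) = - (1/(J t * k)) * (J t * Im (u t * cnj (du t)))"
    unfolding e by (simp add: algebra_simps)
  also have "\<dots> = Im (cnj (u t) * du t) / k"
    using J0 k0 by (simp add: field_simps)
  finally show ?thesis by (simp add: polar)
qed

lemma coupling_bound:
  fixes P R :: complex and \<kappa> \<Lambda> :: real
  shows "\<bar>2 * Re (cnj (P - R) * (\<i> * complex_of_real \<kappa> * R - \<i> * complex_of_real \<Lambda> * P))\<bar>
         \<le> \<bar>\<kappa> - \<Lambda>\<bar> * cmod (P + R) * cmod (P - R)"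
proof -
  have eq: "2 * Re (cnj (P - R) * (\<i> * complex_of_real \<kappa> * R - \<i> * complex_of_real \<Lambda> * P))
        = (\<kappa> - \<Lambda>) * Re (\<i> * cnj (P - R) * (P + R))"
    by (simp add: algebra_simps)
  have "\<bar>Re (\<i> * cnj (P - R) * (P + R))\<bar> \<le> cmod (\<i> * cnj (P - R) * (P + R))" by (rule abs_Re_le_cmod)
  also have "\<dots> = cmod (P + R) * cmod (P - R)" by (simp only: norm_mult complex_mod_cnj norm_ii) simp
  finally show ?thesis unfolding eq abs_mult
    by (simp add: mult.assoc mult_left_mono)
qed

text \<open>The logarithmic gauge \<open>ln (\<surd>(n+\<epsilon>) + \<surd>(n+C+2\<epsilon>))\<close>; for \<open>\<epsilon> \<rightarrow> 0\<close> and \<open>n = |P-R|\<^sup>2\<close>,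
  \<open>C = |P+R|\<^sup>2 - |P-R|\<^sup>2\<close> it becomes \<open>ln (|P-R| + |P+R|)\<close>.\<close>
definition log_gauge :: "real \<Rightarrow> real \<Rightarrow> real \<Rightarrow> real" where
  "log_gauge \<epsilon> C n = ln (sqrt (n + \<epsilon>) + sqrt (n + C + 2*\<epsilon>))"

lemma log_gauge_has_real_derivative:
  fixes N :: "real \<Rightarrow> real"
  assumes dN: "(N has_real_derivative N') (at t)" and pos: "0 \<le> N t" "0 \<le> C" "0 < \<epsilon>"
  shows "((\<lambda>x. log_gauge \<epsilon> C (N x)) has_real_derivative
          N' / (2 * sqrt (N t + \<epsilon>) * sqrt (N t + C + 2*\<epsilon>))) (at t)"
proof -
  define y where "y = sqrt (N t + \<epsilon>)"
  define z where "z = sqrt (N t + C + 2*\<epsilon>)"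
  have Y: "0 < y" and Z: "0 < z" using pos by (auto simp: y_def z_def)
  have s1: "((\<lambda>x. sqrt (N x + \<epsilon>)) has_real_derivative (inverse y / 2 * N')) (at t)"
    using DERIV_chain2[OF DERIV_real_sqrt DERIV_add[OF dN DERIV_const[of \<epsilon>]]] pos by (simp add: y_def)
  have s2: "((\<lambda>x. sqrt (N x + C + 2*\<epsilon>)) has_real_derivative (inverse z / 2 * N')) (at t)"
    using DERIV_chain2[OF DERIV_real_sqrt DERIV_add[OF dN DERIV_const[of "C + 2*\<epsilon>"]]] pos
    by (simp add: z_def add.assoc)
  have "((\<lambda>x. log_gauge \<epsilon> C (N x)) has_real_derivative
     1 / (y + z) * (inverse y / 2 * N' + inverse z / 2 * N')) (at t)"
    unfolding log_gauge_def
    using DERIV_chain2[OF DERIV_ln_divide DERIV_add[OF s1 s2]] add_pos_pos[OF Y Z]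
    by (simp add: y_def z_def)
  moreover have "1 / (y + z) * (inverse y / 2 * N' + inverse z / 2 * N') = N' / (2 * y * z)"
  proof -
    have "inverse y / 2 * N' + inverse z / 2 * N' = (y + z) * (N' / (2 * y * z))"
      using Y Z by (simp add: field_simps)
    then show ?thesis using Y Z by simp
  qed
  ultimately show ?thesis by (simp add: y_def z_def)
qed

lemma log_gauge_derivative_bound:
  fixes N' G a b N C \<epsilon> :: real
  assumes "\<bar>N'\<bar> \<le> G * a * b" "0 \<le> G" "0 \<le> a" "0 \<le> b" "b\<^sup>2 = N" "a\<^sup>2 = N + C" "0 \<le> C" "0 < \<epsilon>"
  shows "\<bar>N' / (2 * sqrt (N + \<epsilon>) * sqrt (N + C + 2*\<epsilon>))\<bar> \<le> G / 2"
proof -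
  have N0: "0 \<le> N" using assms(5) by (metis zero_le_power2)
  have Y: "0 < sqrt (N + \<epsilon>)" and Z: "0 < sqrt (N + C + 2*\<epsilon>)" using N0 assms by auto
  have "b = sqrt N" using assms(4,5) by (metis real_sqrt_abs abs_of_nonneg)
  then have bY: "b \<le> sqrt (N + \<epsilon>)" using assms by simp
  have "a = sqrt (N + C)" using assms(3,6) by (metis real_sqrt_abs abs_of_nonneg)
  then have aZ: "a \<le> sqrt (N + C + 2*\<epsilon>)" using assms by simp
  have "G * a * b \<le> G * sqrt (N + C + 2*\<epsilon>) * sqrt (N + \<epsilon>)"
    using aZ bY assms by (intro mult_mono) auto
  then have "\<bar>N'\<bar> \<le> G * (sqrt (N + \<epsilon>) * sqrt (N + C + 2*\<epsilon>))" using assms(1) by (simp add: ac_simps)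
  then show ?thesis using Y Z by (simp add: abs_divide abs_mult divide_le_eq field_simps)
qed

lemma coupled_system_log_estimate:
  fixes P R :: "real \<Rightarrow> complex" and \<kappa> \<Lambda> F :: "real \<Rightarrow> real"
  assumes S: "finite S" and ab: "a \<le> b" and eps: "0 < \<epsilon>" and C: "0 \<le> C"
    and cP: "continuous_on {a..b} P" and cR: "continuous_on {a..b} R"
    and dP: "\<And>x. x \<in> {a<..<b} - S \<Longrightarrow> (P has_vector_derivative \<i> * complex_of_real (\<kappa> x) * R x) (at x)"
    and dR: "\<And>x. x \<in> {a<..<b} - S \<Longrightarrow> (R has_vector_derivative \<i> * complex_of_real (\<Lambda> x) * P x) (at x)"
    and conserved: "\<And>x. x \<in> {a..b} \<Longrightarrow> (cmod (P x + R x))\<^sup>2 = (cmod (P x - R x))\<^sup>2 + C"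
    and F: "\<And>x. x \<in> {a..b} \<Longrightarrow> \<bar>\<kappa> x - \<Lambda> x\<bar> \<le> F x" and F0: "\<And>x. 0 \<le> F x"
    and Fint: "F integrable_on {a..b}"
  shows "log_gauge \<epsilon> C ((cmod (P a - R a))\<^sup>2) - log_gauge \<epsilon> C ((cmod (P b - R b))\<^sup>2)
         \<le> integral {a..b} F / 2"
proof -
  define N where "N x = (cmod (P x - R x))\<^sup>2" for x
  define N' where
    "N' x = 2 * Re (cnj (P x - R x) * (\<i> * complex_of_real (\<kappa> x) * R x - \<i> * complex_of_real (\<Lambda> x) * P x))" for x
  have N0: "0 \<le> N x" for x by (simp add: N_def)
  have dN: "(N has_real_derivative N' x) (at x)" if "x \<in> {a<..<b} - S" for x
    unfolding N_def[abs_def] N'_def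
    by (rule normsq_has_real_derivative[OF has_vector_derivative_diff[OF dP[OF that] dR[OF that]]])
  have "log_gauge \<epsilon> C (N a) - log_gauge \<epsilon> C (N b) \<le> integral {a..b} (\<lambda>x. F x / 2)"
  proof (rule decrease_le_integral[OF S ab])
    fix x assume "x \<in> {a<..<b} - S"
    from log_gauge_has_real_derivative[OF dN[OF this] N0 C eps]
    show "((\<lambda>x. log_gauge \<epsilon> C (N x)) has_real_derivative
            N' x / (2 * sqrt (N x + \<epsilon>) * sqrt (N x + C + 2*\<epsilon>))) (at x)" .
  next
    have "sqrt (N x + \<epsilon>) + sqrt (N x + C + 2*\<epsilon>) \<noteq> 0" for x
    proof -
      have "0 < sqrt (N x + \<epsilon>)" "0 \<le> sqrt (N x + C + 2*\<epsilon>)" using N0[of x] eps C by simp_all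
      then show ?thesis by linarith
    qed
    then show "continuous_on {a..b} (\<lambda>x. log_gauge \<epsilon> C (N x))"
      unfolding log_gauge_def N_def by (intro continuous_intros cP cR) auto
  next
    fix x assume x: "x \<in> {a..b} - S"
    have "\<bar>N' x\<bar> \<le> \<bar>\<kappa> x - \<Lambda> x\<bar> * cmod (P x + R x) * cmod (P x - R x)"
      unfolding N'_def by (rule coupling_bound)
    also have "\<dots> \<le> F x * cmod (P x + R x) * cmod (P x - R x)"
      using F[of x] x by (intro mult_right_mono) auto
    finally have "\<bar>N' x\<bar> \<le> F x * cmod (P x + R x) * cmod (P x - R x)" .
    then show "\<bar>N' x / (2 * sqrt (N x + \<epsilon>) * sqrt (N x + C + 2*\<epsilon>))\<bar> \<le> F x / 2"
      by (rule log_gauge_derivative_bound) (use conserved[of x] x F0 C eps in \<open>auto simp: N_def\<close>)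
  next
    show "0 \<le> F x / 2" for x using F0[of x] by simp
    show "(\<lambda>x. F x / 2) integrable_on {a..b}" using Fint by (rule integrable_on_divide)
  qed
  also have "integral {a..b} (\<lambda>x. F x / 2) = integral {a..b} F / 2"
    by (rule integral_divide) 
  finally show ?thesis by (simp add: N_def)
qed

lemma liouville_gap_log_estimate:
  fixes q :: "real \<Rightarrow> real" and u du :: "real \<Rightarrow> complex" and J J' J'' :: "real \<Rightarrow> real"
  assumes sol: "schrod_solution q u du"
    and Sfin: "\<And>a b. finite (S \<inter> {a..b})" and Scont: "\<And>x. x \<notin> S \<Longrightarrow> isCont q x"
    and J_pos: "\<And>x. J x > 0"
    and J_d1: "\<And>x. (J has_real_derivative J' x) (at x)"
    and J_d2: "\<And>x. (J' has_real_derivative J'' x) (at x)"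
    and k: "k > 0"
    and wr: "\<And>x. Im (cnj (u x) * du x) = k * W"
    and ab: "a \<le> b" and eps: "0 < \<epsilon>" and W: "0 \<le> W"
    and Fint: "(\<lambda>x. \<bar>(J x)\<^sup>2 / k * (q x + J'' x / J x) - k / (J x)\<^sup>2\<bar>) integrable_on {a..b}"
  shows "log_gauge \<epsilon> (4 * W) (liouville_gap k u du J J' a)
           - log_gauge \<epsilon> (4 * W) (liouville_gap k u du J J' b)
         \<le> integral {a..b} (\<lambda>x. \<bar>(J x)\<^sup>2 / k * (q x + J'' x / J x) - k / (J x)\<^sup>2\<bar>) / 2"
  unfolding liouville_gap_def
proof (rule coupled_system_log_estimate[where \<kappa>="\<lambda>x. k / (J x)\<^sup>2"
      and \<Lambda>="\<lambda>x. (J x)\<^sup>2 / k * (q x + J'' x / J x)", OF Sfin ab eps _ _ _ _ _ _ _ _ Fint])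
  have du_d: "\<And>x. (u has_vector_derivative du x) (at x)" and cdu: "continuous_on UNIV du"
    using sol unfolding schrod_solution_def by simp_all
  have cu: "continuous_on UNIV u"
    by (rule continuous_on_vector_derivative) (use du_d has_vector_derivative_at_within in blast)
  have cJ: "continuous_on UNIV J"
    by (rule continuous_at_imp_continuous_on) (use J_d1 DERIV_isCont in blast)
  have cJ': "continuous_on UNIV J'"
    by (rule continuous_at_imp_continuous_on) (use J_d2 DERIV_isCont in blast)
  have J0: "J x \<noteq> 0" for x using J_pos[of x] by simp
  have k0: "k \<noteq> 0" using k by simp
  have "continuous_on UNIV (liouville_P u J)"
    unfolding liouville_P_def[abs_def] using J0 by (intro continuous_intros cu cJ) auto
  then show "continuous_on {a..b} (liouville_P u J)" by (rule continuous_on_subset) simp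
  have "continuous_on UNIV (liouville_R k u du J J')"
    unfolding liouville_R_def[abs_def] using k0 by (intro continuous_intros cu cdu cJ cJ') auto
  then show "continuous_on {a..b} (liouville_R k u du J J')" by (rule continuous_on_subset) simp
  fix x
  assume "x \<in> {a<..<b} - S \<inter> {a..b}"
  then have "x \<notin> S" by auto
  show "(liouville_P u J has_vector_derivative
          \<i> * complex_of_real (k / (J x)\<^sup>2) * liouville_R k u du J J' x) (at x)"
    by (rule liouville_P_has_vector_derivative[where u=u and du=du and J=J and J'=J' and k=k and t=x, OF du_d J_d1 J0 k0])
  show "(liouville_R k u du J J' has_vector_derivative
          \<i> * complex_of_real ((J x)\<^sup>2 / k * (q x + J'' x / J x)) * liouville_P u J x) (at x)"
    by (rule liouville_R_has_vector_derivative[where u=u and du=du and J=J and J'=J' and J''=J'' and q=q and k=k and t=x, OF du_d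
          schrod_second_derivative[OF sol Scont[OF \<open>x \<notin> S\<close>]] J_d1 J_d2 J0 k0])
next
  fix x
  show "(cmod (liouville_P u J x + liouville_R k u du J J' x))\<^sup>2
      = (cmod (liouville_P u J x - liouville_R k u du J J' x))\<^sup>2 + 4 * W"
    using liouville_pair_wronskian[of J x k u du J'] J_pos[of x] k unfolding wr by simp
  show "\<bar>k / (J x)\<^sup>2 - (J x)\<^sup>2 / k * (q x + J'' x / J x)\<bar>
      \<le> \<bar>(J x)\<^sup>2 / k * (q x + J'' x / J x) - k / (J x)\<^sup>2\<bar>"
    by (simp add: abs_minus_commute)
qed (use W in simp_all)

lemma liouville_gap_tendsto:
  fixes u du :: "real \<Rightarrow> complex" and J J' :: "real \<Rightarrow> real" and g :: "'a \<Rightarrow> real"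
    and a0 b0 :: "'a \<Rightarrow> complex"
  assumes ua: "((\<lambda>n. u (g n) - a0 n) \<longlongrightarrow> 0) F" and ub: "((\<lambda>n. du (g n) - b0 n) \<longlongrightarrow> 0) F"
    and J1: "((\<lambda>n. J (g n)) \<longlongrightarrow> 1) F" and J'0: "((\<lambda>n. J' (g n)) \<longlongrightarrow> 0) F"
    and Ba: "\<And>n. norm (a0 n) \<le> Ba" and Bb: "\<And>n. norm (b0 n) \<le> Bb"
    and J0: "\<And>x. J x \<noteq> 0"
    and L: "\<And>n. cmod (a0 n + \<i> / complex_of_real k * b0 n) = L"
  shows "((\<lambda>n. liouville_gap k u du J J' (g n)) \<longlongrightarrow> L\<^sup>2) F"
proof -
  define P where "P n = liouville_P u J (g n)" for n
  define R where "R n = liouville_R k u du J J' (g n)" for n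
  define c where "c = \<i> / complex_of_real k"
  have cJ1: "((\<lambda>n. complex_of_real (J (g n)) - 1) \<longlongrightarrow> 0) F"
    using tendsto_diff[OF tendsto_of_real[OF J1] tendsto_const[of 1]] by simp
  have cJ'0: "((\<lambda>n. complex_of_real (J' (g n))) \<longlongrightarrow> 0) F" using tendsto_of_real[OF J'0] by simp
  have "((\<lambda>n. complex_of_real (1 / J (g n))) \<longlongrightarrow> complex_of_real (1 / 1)) F"
    by (intro tendsto_of_real tendsto_divide tendsto_const J1) simp
  then have iJ: "((\<lambda>n. complex_of_real (1 / J (g n))) \<longlongrightarrow> 1) F" by simp
  have iJ0: "((\<lambda>n. complex_of_real (1 / J (g n)) - 1) \<longlongrightarrow> 0) F"
    using tendsto_diff[OF iJ tendsto_const[of 1]] by simp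
  have "((\<lambda>n. (u (g n) - a0 n) * complex_of_real (1 / J (g n)) + (complex_of_real (1 / J (g n)) - 1) * a0 n
      + c * (complex_of_real (J (g n)) * (du (g n) - b0 n) + (complex_of_real (J (g n)) - 1) * b0 n
        - complex_of_real (J' (g n)) * (u (g n) - a0 n) - complex_of_real (J' (g n)) * a0 n))
      \<longlongrightarrow> 0 * 1 + 0 + c * (1 * 0 + 0 - 0 * 0 - 0)) F"
    by (intro tendsto_add tendsto_mult tendsto_diff tendsto_const ua ub iJ cJ'0
        tendsto_zero_mult_bounded[OF iJ0 Ba] tendsto_zero_mult_bounded[OF cJ1 Bb]
        tendsto_zero_mult_bounded[OF cJ'0 Ba])
       (use tendsto_of_real[OF J1] in simp)
  moreover have "(u (g n) - a0 n) * complex_of_real (1 / J (g n)) + (complex_of_real (1 / J (g n)) - 1) * a0 n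
      + c * (complex_of_real (J (g n)) * (du (g n) - b0 n) + (complex_of_real (J (g n)) - 1) * b0 n
        - complex_of_real (J' (g n)) * (u (g n) - a0 n) - complex_of_real (J' (g n)) * a0 n)
     = (P n - R n) - (a0 n + c * b0 n)" for n
    by (simp add: P_def R_def c_def liouville_P_def liouville_R_def algebra_simps)
       (simp add: add_divide_distrib[symmetric])
  ultimately have D: "((\<lambda>n. (P n - R n) - (a0 n + c * b0 n)) \<longlongrightarrow> 0) F" by simp
  have "((\<lambda>n. cmod (P n - R n) - L) \<longlongrightarrow> 0) F"
  proof (rule Lim_null_comparison)
    show "eventually (\<lambda>n. norm (cmod (P n - R n) - L) \<le> cmod ((P n - R n) - (a0 n + c * b0 n))) F"
      using L by (intro always_eventually allI) (metis c_def norm_triangle_ineq3 real_norm_def)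
    show "((\<lambda>n. cmod ((P n - R n) - (a0 n + c * b0 n))) \<longlongrightarrow> 0) F"
      using tendsto_norm[OF D] by simp
  qed
  then have "((\<lambda>n. cmod (P n - R n) - L + L) \<longlongrightarrow> 0 + L) F" by (intro tendsto_add tendsto_const)
  then have "((\<lambda>n. (cmod (P n - R n))\<^sup>2) \<longlongrightarrow> L\<^sup>2) F" by (intro tendsto_intros) simp
  then show ?thesis by (simp add: liouville_gap_def P_def R_def)
qed

text \<open>A piecewise continuous function is Borel measurable: its discontinuities are countable.\<close>
lemma piecewise_continuous_borel_measurable:
  assumes "piecewise_continuous q"
  shows "q \<in> borel_measurable borel"
proof -
  obtain S where Sfin: "\<And>a b. finite (S \<inter> {a..b})" and Scont: "\<And>x. x \<notin> S \<Longrightarrow> isCont q x"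
    using assms unfolding piecewise_continuous_def by blast
  have "S \<subseteq> (\<Union>n::nat. S \<inter> {- real n..real n})"
  proof
    fix x assume "x \<in> S"
    obtain n :: nat where "\<bar>x\<bar> \<le> real n" using real_arch_simple by blast
    with \<open>x \<in> S\<close> show "x \<in> (\<Union>n::nat. S \<inter> {- real n..real n})" by (intro UN_I[of n]) auto
  qed
  moreover have "countable (\<Union>n::nat. S \<inter> {- real n..real n})"
  proof (rule countable_UN)
    show "countable (S \<inter> {- real n..real n})" for n :: nat by (rule countable_finite[OF Sfin])
  qed simp
  ultimately have "countable S" by (rule countable_subset)
  then show ?thesis
    by (rule borel_measurable_continuous_countable_exceptions)
       (use Scont in \<open>auto intro!: continuous_at_imp_continuous_on\<close>)
qed

lemma integrable_on_interval_of_nn_integral: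
  fixes f :: "real \<Rightarrow> real"
  assumes mf: "f \<in> borel_measurable lborel" and f0: "\<And>x. 0 \<le> f x"
    and fin: "(\<integral>\<^sup>+ x. ennreal (f x) \<partial>lborel) < \<infinity>"
  shows "f integrable_on {a..b}" and "integral {a..b} f \<le> enn2real (\<integral>\<^sup>+ x. ennreal (f x) \<partial>lborel)"
proof -
  have int: "integrable lborel f"
    by (rule integrableI_nonneg[OF mf]) (use fin f0 in auto)
  have si: "set_integrable lborel {a..b} f"
    unfolding set_integrable_def by (rule integrable_mult_indicator[OF _ int]) simp
  show "f integrable_on {a..b}" using set_borel_integral_eq_integral(1)[OF si] .
  have "(LINT x : {a..b} | lborel. f x) \<le> integral\<^sup>L lborel f"
    unfolding set_lebesgue_integral_def
    by (rule integral_mono[OF si[unfolded set_integrable_def] int]) (auto simp: f0 indicator_def)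
  moreover have "integral\<^sup>L lborel f = enn2real (\<integral>\<^sup>+ x. ennreal (f x) \<partial>lborel)"
    by (rule integral_eq_nn_integral[OF mf]) (simp add: f0)
  ultimately show "integral {a..b} f \<le> enn2real (\<integral>\<^sup>+ x. ennreal (f x) \<partial>lborel)"
    using set_borel_integral_eq_integral(2)[OF si] by simp
qed

text \<open>If \<open>J\<close> has a limit at \<open>+\<infinity>\<close>, then by the mean value theorem on \<open>[n, n+1]\<close> its
  derivative tends to zero along some sequence tending to \<open>+\<infinity>\<close> (although possibly not
  along all of them).\<close>
lemma deriv_vanishing_sequence_at_top:
  fixes J J' :: "real \<Rightarrow> real"
  assumes dJ: "\<And>x. (J has_real_derivative J' x) (at x)" and lim: "(J \<longlongrightarrow> c) at_top"
  obtains xs :: "nat \<Rightarrow> real"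
  where "filterlim xs at_top sequentially" "((\<lambda>n. J' (xs n)) \<longlongrightarrow> 0) sequentially"
proof -
  have "\<exists>z. real n < z \<and> J (real n + 1) - J (real n) = J' z" for n :: nat
    using MVT2[of "real n" "real n + 1" J J'] dJ by force
  then obtain xs where xs: "\<And>n. real n < xs n \<and> J (real n + 1) - J (real n) = J' (xs n)" by metis
  have "filterlim xs at_top sequentially"
    by (rule filterlim_at_top_mono[OF filterlim_real_sequentially])
       (use xs in \<open>auto intro!: always_eventually less_imp_le\<close>)
  moreover have "((\<lambda>n. J (real n + 1) - J (real n)) \<longlongrightarrow> c - c) sequentially"
    by (intro tendsto_diff filterlim_compose[OF lim] filterlim_real_sequentially
        filterlim_compose[OF filterlim_shift_at_top filterlim_real_sequentially])
  then have "((\<lambda>n. J' (xs n)) \<longlongrightarrow> 0) sequentially" using xs by simp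
  ultimately show ?thesis by (rule that)
qed

lemma deriv_vanishing_sequence_at_bot:
  fixes J J' :: "real \<Rightarrow> real"
  assumes dJ: "\<And>x. (J has_real_derivative J' x) (at x)" and lim: "(J \<longlongrightarrow> c) at_bot"
  obtains ys :: "nat \<Rightarrow> real"
  where "filterlim ys at_bot sequentially" "((\<lambda>n. J' (ys n)) \<longlongrightarrow> 0) sequentially"
proof -
  have "((\<lambda>x. J (- x)) has_real_derivative - J' (- x)) (at x)" for x
    using DERIV_chain2[OF dJ DERIV_minus[OF DERIV_ident]] by simp
  moreover have "((\<lambda>x. J (- x)) \<longlongrightarrow> c) at_top" using lim unfolding filterlim_at_bot_mirror .
  ultimately obtain xs where xs: "filterlim xs at_top sequentially"
    and lim_xs: "((\<lambda>n. - J' (- xs n)) \<longlongrightarrow> 0) sequentially"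
    by (rule deriv_vanishing_sequence_at_top)
  show ?thesis
  proof (rule that)
    show "filterlim (\<lambda>n. - xs n) at_bot sequentially"
      using xs by (simp add: filterlim_uminus_at_top[symmetric])
    show "((\<lambda>n. J' (- xs n)) \<longlongrightarrow> 0) sequentially" using tendsto_minus[OF lim_xs] by simp
  qed
qed

lemma scattering_gap_limits:
  fixes u du :: "real \<Rightarrow> complex" and J J' :: "real \<Rightarrow> real"
  assumes k: "k > 0"
    and asym_bot: "((\<lambda>x. u x - (exp (\<i> * complex_of_real (k * x))
                        + r * exp (- \<i> * complex_of_real (k * x)))) \<longlongrightarrow> 0) at_bot"
    and asym_top: "((\<lambda>x. u x - \<tau> * exp (\<i> * complex_of_real (k * x))) \<longlongrightarrow> 0) at_top"
    and dasym_top: "((\<lambda>x. du x - \<i> * complex_of_real k * \<tau> * exp (\<i> * complex_of_real (k * x))) \<longlongrightarrow> 0) at_top"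
    and dasym_bot: "((\<lambda>x. du x - \<i> * complex_of_real k * (exp (\<i> * complex_of_real (k * x))
                        - r * exp (- \<i> * complex_of_real (k * x)))) \<longlongrightarrow> 0) at_bot"
    and J_pos: "\<And>x. J x > 0"
    and J_d1: "\<And>x. (J has_real_derivative J' x) (at x)"
    and J_top: "(J \<longlongrightarrow> 1) at_top" and J_bot: "(J \<longlongrightarrow> 1) at_bot"
  obtains xs ys :: "nat \<Rightarrow> real"
  where "filterlim xs at_top sequentially" "filterlim ys at_bot sequentially"
    "((\<lambda>n. liouville_gap k u du J J' (xs n)) \<longlongrightarrow> 0\<^sup>2) sequentially"
    "((\<lambda>n. liouville_gap k u du J J' (ys n)) \<longlongrightarrow> (2 * cmod r)\<^sup>2) sequentially"
proof -
  obtain xs where xs: "filterlim xs at_top sequentially" and J'xs: "((\<lambda>n. J' (xs n)) \<longlongrightarrow> 0) sequentially"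
    using deriv_vanishing_sequence_at_top[OF J_d1 J_top] by blast
  obtain ys where ys: "filterlim ys at_bot sequentially" and J'ys: "((\<lambda>n. J' (ys n)) \<longlongrightarrow> 0) sequentially"
    using deriv_vanishing_sequence_at_bot[OF J_d1 J_bot] by blast
  have J0: "J x \<noteq> 0" for x using J_pos[of x] by simp
  have wave_bound: "cmod (exp (\<i> * complex_of_real (k * x)) + r * exp (- \<i> * complex_of_real (k * x)))
      \<le> 1 + cmod r" for x
    using norm_triangle_ineq[of "exp (\<i> * complex_of_real (k * x))" "r * exp (- \<i> * complex_of_real (k * x))"]
    unfolding norm_mult norm_exp_i_real norm_exp_minus_i_real by simp
  have dwave_bound: "cmod (\<i> * complex_of_real k * (exp (\<i> * complex_of_real (k * x))
      - r * exp (- \<i> * complex_of_real (k * x)))) \<le> k * (1 + cmod r)" for x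
    using norm_triangle_ineq4[of "exp (\<i> * complex_of_real (k * x))" "r * exp (- \<i> * complex_of_real (k * x))"] k
    unfolding norm_mult norm_exp_i_real norm_exp_minus_i_real by simp
  show ?thesis
  proof (rule that[OF xs ys])
    show "((\<lambda>n. liouville_gap k u du J J' (xs n)) \<longlongrightarrow> 0\<^sup>2) sequentially"
      by (rule liouville_gap_tendsto[OF filterlim_compose[OF asym_top xs] filterlim_compose[OF dasym_top xs]
            filterlim_compose[OF J_top xs] J'xs _ _ J0])
         (use k in \<open>auto simp: norm_mult norm_exp_i_real field_simps\<close>)
    show "((\<lambda>n. liouville_gap k u du J J' (ys n)) \<longlongrightarrow> (2 * cmod r)\<^sup>2) sequentially"
      by (rule liouville_gap_tendsto[OF filterlim_compose[OF asym_bot ys] filterlim_compose[OF dasym_bot ys]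
            filterlim_compose[OF J_bot ys] J'ys wave_bound dwave_bound J0])
         (use k in \<open>auto simp: norm_mult norm_exp_minus_i_real field_simps\<close>)
  qed
qed

section \<open>The limiting argument\<close>

lemma tendsto_log_gauge:
  assumes "(f \<longlongrightarrow> n0) F" "0 \<le> n0" "0 < \<epsilon>" "0 \<le> C"
  shows "((\<lambda>x. log_gauge \<epsilon> C (f x)) \<longlongrightarrow> log_gauge \<epsilon> C n0) F"
proof -
  have "0 < sqrt (n0 + \<epsilon>)" "0 \<le> sqrt (n0 + C + 2 * \<epsilon>)" using assms(2-4) by simp_all
  then have "sqrt (n0 + \<epsilon>) + sqrt (n0 + C + 2 * \<epsilon>) \<noteq> 0" by linarith
  then show ?thesis unfolding log_gauge_def using assms(1) by (intro tendsto_intros) auto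
qed

lemma decrease_bound_limits:
  fixes g :: "real \<Rightarrow> real" and xs ys :: "nat \<Rightarrow> real"
  assumes decrease: "\<And>a b. a \<le> b \<Longrightarrow> g a - g b \<le> c"
    and xs: "filterlim xs at_top sequentially" and ys: "filterlim ys at_bot sequentially"
    and gxs: "((\<lambda>n. g (xs n)) \<longlongrightarrow> gt) sequentially"
    and gys: "((\<lambda>n. g (ys n)) \<longlongrightarrow> gb) sequentially"
  shows "gb - gt \<le> c"
proof (rule tendsto_le[OF trivial_limit_sequentially tendsto_const tendsto_diff[OF gys gxs]])
  have "eventually (\<lambda>n. 0 \<le> xs n) sequentially" using xs by (simp add: filterlim_at_top)
  moreover have "eventually (\<lambda>n. ys n \<le> 0) sequentially" using ys by (simp add: filterlim_at_bot)
  ultimately show "eventually (\<lambda>n. g (ys n) - g (xs n) \<le> c) sequentially"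
    by eventually_elim (rule decrease; linarith)
qed

text \<open>The elementary inequality behind the \<open>sech\<close>: if \<open>s\<^sup>2 + \<rho>\<^sup>2 = 1\<close> and
  \<open>1 + \<rho> \<le> e\<^sup>A s\<close>, then \<open>sech\<^sup>2 A \<le> s\<^sup>2\<close>, since \<open>w = (1+\<rho>)/s\<close> satisfies \<open>w + 1/w = 2/s\<close>.\<close>
lemma sech_square_le:
  fixes s \<rho> A :: real
  assumes s0: "0 \<le> s" and r0: "0 \<le> \<rho>" and sr: "s\<^sup>2 + \<rho>\<^sup>2 = 1" and le: "1 + \<rho> \<le> exp A * s"
  shows "(sech A)\<^sup>2 \<le> s\<^sup>2"
proof -
  have sp: "0 < s" using le r0 s0 by (cases "s = 0") auto
  have s1: "s \<le> 1" using sr r0 s0 by (metis abs_of_nonneg abs_square_le_1 le_add_same_cancel1 zero_le_power2)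
  define w where "w = (1 + \<rho>) / s"
  define X where "X = exp A"
  have X0: "0 < X" by (simp add: X_def)
  have w1: "1 \<le> w" using s1 sp r0 by (simp add: w_def field_simps)
  have wX: "w \<le> X" using le sp by (simp add: w_def X_def divide_le_eq mult.commute)
  have "w + 1 / w = ((1 + \<rho>)\<^sup>2 + s\<^sup>2) / (s * (1 + \<rho>))"
    using sp r0 by (simp add: w_def field_simps power2_eq_square)
  also have "(1 + \<rho>)\<^sup>2 + s\<^sup>2 = 2 * (1 + \<rho>)" using sr by (simp add: power2_eq_square algebra_simps)
  also have "(2 * (1 + \<rho>)) / (s * (1 + \<rho>)) = 2 / s"
    by (rule nonzero_mult_divide_mult_cancel_right) (use r0 in simp)
  finally have ww: "w + 1 / w = 2 / s" .
  have "X + 1 / X - (w + 1 / w) = (X - w) * (1 - 1 / (X * w))" using X0 w1 by (simp add: field_simps)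
  moreover have "1 / (X * w) \<le> 1" using X0 w1 wX by (simp add: divide_le_eq) (metis mult_mono' order_trans less_eq_real_def zero_le_one mult_1)
  ultimately have "w + 1 / w \<le> X + 1 / X" using wX by (metis diff_ge_0_iff_ge mult_nonneg_nonneg)
  moreover have "cosh A = (X + 1 / X) / 2" by (simp add: cosh_def X_def exp_minus field_simps)
  ultimately have "1 / s \<le> cosh A" using ww by simp
  then have "sech A \<le> s" using sp by (simp add: sech_def divide_le_eq field_simps)
  moreover have "0 \<le> sech A" by (simp add: sech_def)
  ultimately show ?thesis by (simp add: power_mono)
qed

text \<open>Letting \<open>\<epsilon> \<rightarrow> 0\<close> in the gauge inequality between the end values \<open>(2\<rho>)\<^sup>2\<close> and \<open>0\<close> of
  the gap gives \<open>2 + 2\<rho> \<le> e\<^sup>I\<^sup>/\<^sup>2 2s\<close>, hence the \<open>sech\<close> bound.\<close>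
lemma sech_bound_from_gauge:
  fixes s \<rho> I :: real
  assumes gauge: "\<And>\<epsilon>. 0 < \<epsilon> \<Longrightarrow> log_gauge \<epsilon> (4 * s\<^sup>2) ((2 * \<rho>)\<^sup>2) - log_gauge \<epsilon> (4 * s\<^sup>2) 0 \<le> I / 2"
    and s0: "0 \<le> s" and r0: "0 \<le> \<rho>" and sr: "s\<^sup>2 + \<rho>\<^sup>2 = 1"
  shows "(sech (I/2))\<^sup>2 \<le> s\<^sup>2"
proof (rule sech_square_le[OF s0 r0 sr])
  define A where "A \<epsilon> = sqrt ((2*\<rho>)\<^sup>2 + \<epsilon>) + sqrt ((2*\<rho>)\<^sup>2 + 4 * s\<^sup>2 + 2*\<epsilon>)" for \<epsilon>
  define B where "B \<epsilon> = exp (I/2) * (sqrt \<epsilon> + sqrt (4 * s\<^sup>2 + 2*\<epsilon>))" for \<epsilon>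
  have AB: "A \<epsilon> \<le> B \<epsilon>" if e: "0 < \<epsilon>" for \<epsilon>
  proof -
    have A0: "0 < A \<epsilon>" unfolding A_def using e
      by (intro add_pos_nonneg) (simp_all add: add_nonneg_pos)
    have B0: "0 < sqrt \<epsilon> + sqrt (4 * s\<^sup>2 + 2*\<epsilon>)" using e by (intro add_pos_nonneg) simp_all
    have "ln (A \<epsilon>) \<le> ln (sqrt \<epsilon> + sqrt (4 * s\<^sup>2 + 2*\<epsilon>)) + I / 2"
      using gauge[OF e] by (simp add: log_gauge_def A_def)
    then have "exp (ln (A \<epsilon>)) \<le> exp (ln (sqrt \<epsilon> + sqrt (4 * s\<^sup>2 + 2*\<epsilon>)) + I / 2)" by simp
    then show ?thesis using A0 B0 by (simp add: B_def exp_add mult.commute)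
  qed
  have lim_A: "(A \<longlongrightarrow> A 0) (at_right 0)" and lim_B: "(B \<longlongrightarrow> B 0) (at_right 0)"
    unfolding A_def B_def by (intro tendsto_intros)+
  have "A 0 \<le> B 0"
    by (rule tendsto_le[OF trivial_limit_at_right_real lim_B lim_A])
       (use eventually_at_right_less[of 0] AB in \<open>auto elim: eventually_mono\<close>)
  moreover have "A 0 = 2 * \<rho> + 2"
  proof -
    have "(2*\<rho>)\<^sup>2 + 4 * s\<^sup>2 + 2*0 = 2\<^sup>2" using sr by (simp add: power2_eq_square algebra_simps)
    moreover have "sqrt ((2*\<rho>)\<^sup>2 + 0) = 2 * \<rho>"
      using r0 by (simp only: add_0_right real_sqrt_abs)
    ultimately show ?thesis unfolding A_def by (simp only: real_sqrt_abs)
  qed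
  moreover have "B 0 = exp (I/2) * (2 * s)"
    using s0 by (simp add: B_def real_sqrt_mult)
  ultimately show "1 + \<rho> \<le> exp (I/2) * s" by simp
qed

theorem mainTheorem9:
  fixes q :: "real \<Rightarrow> real" and kinf :: real
    and u du :: "real \<Rightarrow> complex" and r \<tau> :: complex
    and J J' J'' :: "real \<Rightarrow> real"
  assumes pc: "piecewise_continuous q"
    and kpos: "kinf > 0"
    and lim_top: "(q \<longlongrightarrow> kinf\<^sup>2) at_top"
    and lim_bot: "(q \<longlongrightarrow> kinf\<^sup>2) at_bot"
    and int_tails: "\<exists>c. (\<lambda>x. q x - kinf\<^sup>2) absolutely_integrable_on {c..} \<and>
                         (\<lambda>x. q x - kinf\<^sup>2) absolutely_integrable_on {..c}"
    and sol: "schrod_solution q u du"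
    and asym_bot: "((\<lambda>x. u x - (exp (\<i> * complex_of_real (kinf * x))
                        + r * exp (- \<i> * complex_of_real (kinf * x)))) \<longlongrightarrow> 0) at_bot"
    and asym_top: "((\<lambda>x. u x - \<tau> * exp (\<i> * complex_of_real (kinf * x))) \<longlongrightarrow> 0) at_top"
    and J_pos: "\<And>x. J x > 0"
    and J_d1: "\<And>x. (J has_real_derivative J' x) (at x)"
    and J_d2: "\<And>x. (J' has_real_derivative J'' x) (at x)"
    and J_C2: "continuous_on UNIV J''"
    and J_top: "(J \<longlongrightarrow> 1) at_top"
    and J_bot: "(J \<longlongrightarrow> 1) at_bot"
  shows "(\<integral>\<^sup>+ x. ennreal \<bar>(J x)\<^sup>2 / kinf * (q x + J'' x / J x) - kinf / (J x)\<^sup>2\<bar> \<partial>lborel) < \<infinity>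
         \<longrightarrow> (cmod \<tau>)\<^sup>2 \<ge>
             (sech ((1/2) * enn2real (\<integral>\<^sup>+ x. ennreal \<bar>(J x)\<^sup>2 / kinf * (q x + J'' x / J x) - kinf / (J x)\<^sup>2\<bar> \<partial>lborel)))\<^sup>2"
proof
  define F where "F x = \<bar>(J x)\<^sup>2 / kinf * (q x + J'' x / J x) - kinf / (J x)\<^sup>2\<bar>" for x
  define I where "I = enn2real (\<integral>\<^sup>+ x. ennreal (F x) \<partial>lborel)"
  define gap where "gap = liouville_gap kinf u du J J'"
  assume "(\<integral>\<^sup>+ x. ennreal \<bar>(J x)\<^sup>2 / kinf * (q x + J'' x / J x) - kinf / (J x)\<^sup>2\<bar> \<partial>lborel) < \<infinity>"
  then have fin: "(\<integral>\<^sup>+ x. ennreal (F x) \<partial>lborel) < \<infinity>" by (simp add: F_def)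
  obtain S where Sfin: "\<And>a b. finite (S \<inter> {a..b})" and Scont: "\<And>x. x \<notin> S \<Longrightarrow> isCont q x"
    using pc unfolding piecewise_continuous_def by blast
  note dasym = scattering_derivative_asymptotics[OF sol kpos lim_top lim_bot asym_bot asym_top]
  note flux = scattering_flux[OF pc sol kpos asym_bot asym_top dasym]
  have "continuous_on UNIV J" by (rule continuous_at_imp_continuous_on) (use J_d1 DERIV_isCont in blast)
  then have mJ: "J \<in> borel_measurable borel" by (rule borel_measurable_continuous_onI)
  have mJ'': "J'' \<in> borel_measurable borel" using J_C2 by (rule borel_measurable_continuous_onI)
  have "F \<in> borel_measurable lborel"
    unfolding F_def measurable_lborel1
    using piecewise_continuous_borel_measurable[OF pc] mJ mJ'' by measurable
  note intF = integrable_on_interval_of_nn_integral[OF this _ fin, folded I_def]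
  have decrease: "log_gauge \<epsilon> (4 * (cmod \<tau>)\<^sup>2) (gap a) - log_gauge \<epsilon> (4 * (cmod \<tau>)\<^sup>2) (gap b) \<le> I / 2"
    if "a \<le> b" "0 < \<epsilon>" for a b \<epsilon>
    using liouville_gap_log_estimate[OF sol Sfin Scont J_pos J_d1 J_d2 kpos flux(1) that _
        intF(1)[unfolded F_def]] intF(2)[of a b]
    by (simp add: gap_def F_def)
  obtain xs ys where xs: "filterlim xs at_top sequentially" and ys: "filterlim ys at_bot sequentially"
    and gap_xs: "((\<lambda>n. gap (xs n)) \<longlongrightarrow> 0\<^sup>2) sequentially"
    and gap_ys: "((\<lambda>n. gap (ys n)) \<longlongrightarrow> (2 * cmod r)\<^sup>2) sequentially"
    unfolding gap_def
    by (rule scattering_gap_limits[OF kpos asym_bot asym_top dasym J_pos J_d1 J_top J_bot])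
  have "log_gauge \<epsilon> (4 * (cmod \<tau>)\<^sup>2) ((2 * cmod r)\<^sup>2) - log_gauge \<epsilon> (4 * (cmod \<tau>)\<^sup>2) (0\<^sup>2) \<le> I / 2"
    if "0 < \<epsilon>" for \<epsilon>
    by (rule decrease_bound_limits[OF decrease[OF _ that] xs ys tendsto_log_gauge[OF gap_xs]
          tendsto_log_gauge[OF gap_ys]]) (use that in simp_all)
  then have "(sech (I/2))\<^sup>2 \<le> (cmod \<tau>)\<^sup>2"
    by (intro sech_bound_from_gauge[OF _ _ _ flux(2)]) simp_all
  then show "(cmod \<tau>)\<^sup>2 \<ge> (sech ((1/2) * enn2real (\<integral>\<^sup>+ x. ennreal \<bar>(J x)\<^sup>2 / kinf * (q x + J'' x / J x) - kinf / (J x)\<^sup>2\<bar> \<partial>lborel)))\<^sup>2"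
    by (simp add: I_def F_def)
qed

end
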